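(* Let $(p_0,\dots,p_{n-1})$ be a closed discrete curve with $l_k=l_0$ for all $k$ (arclength parametrized), and let $\kappa\in\mathbb{R}\setminus\{0\}$. Then the curve is an equilibrium of $L+\kappa\mathrm{Vol}$ (i.e. $\nabla_{p_k}L+\kappa\nabla_{p_k}\mathrm{Vol}=0$ for all $k$) if and only if $\theta_k\neq\pi$ for all $k$ and the discrete curvature $\frac{2}{l_0}\tan(\theta_k/2)$ equals $\kappa$ for every $k$.
   Context: A closed discrete curve is an $n$-tuple $(p_0,\dots,p_{n-1})$ of points of $\mathbb{R}^2$ ($n\ge3$), indices modulo $n$, with $l_k:=|p_{k+1}-p_k|\ne0$ for all $k$. $R_\varphi$ denotes rotation of $\mathbb{R}^2$ by $\varphi$. Fix $R\in\{R_{\pi/2},R_{-\pi/2}\}$ and set $\sigma=+1$ if $R=R_{\pi/2}$, $\sigma=-1$ if $R=R_{-\pi/2}$. Edge normal $\nu_k:=R((p_{k+1}-p_k)/l_k)$. The signed angle $\theta_k\in(-\pi,\pi]$ at vertex $p_k$ is defined by $\nu_k=R_{\sigma\theta_k}\nu_{k-1}$. Length $L=\sum_k l_k$, area $\mathrm{Vol}=\frac12\sum_k\langle p_k,\nu_k\rangle l_k$, both functions on $(\mathbb{R}^2)^n$; $\nabla_{p_k}$ is the gradient with respect to $p_k$. *)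

theory Defs
  imports "HOL-Analysis.Analysis"
begin

text \<open>Points of the plane are modelled as complex numbers (the Euclidean plane R^2,
  with inner product Re (z * cnj w)). A configuration of n points is a map
  p :: nat => complex of which only p 0, ..., p (n-1) matter; indices are taken mod n.\<close>

definition rot :: "real \<Rightarrow> complex \<Rightarrow> complex" where
  "rot \<phi> z = cis \<phi> * z"

definition edge :: "nat \<Rightarrow> (nat \<Rightarrow> complex) \<Rightarrow> nat \<Rightarrow> complex" where
  "edge n p k = p ((k + 1) mod n) - p (k mod n)"

definition elen :: "nat \<Rightarrow> (nat \<Rightarrow> complex) \<Rightarrow> nat \<Rightarrow> real" where
  "elen n p k = cmod (edge n p k)"

definition closed_discrete_curve :: "nat \<Rightarrow> (nat \<Rightarrow> complex) \<Rightarrow> bool" where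
  "closed_discrete_curve n p \<longleftrightarrow> n \<ge> 3 \<and> (\<forall>k<n. elen n p k \<noteq> 0)"

text \<open>sigma = 1 means R = R_{pi/2}, sigma = -1 means R = R_{-pi/2}.\<close>
definition normal :: "real \<Rightarrow> nat \<Rightarrow> (nat \<Rightarrow> complex) \<Rightarrow> nat \<Rightarrow> complex" where
  "normal \<sigma> n p k = rot (\<sigma> * pi / 2) (edge n p k / of_real (elen n p k))"

definition signed_angle :: "real \<Rightarrow> nat \<Rightarrow> (nat \<Rightarrow> complex) \<Rightarrow> nat \<Rightarrow> real" where
  "signed_angle \<sigma> n p k = (THE t. t \<in> {-pi<..pi} \<and>
      normal \<sigma> n p k = rot (\<sigma> * t) (normal \<sigma> n p ((k + n - 1) mod n)))"

definition curve_length :: "nat \<Rightarrow> (nat \<Rightarrow> complex) \<Rightarrow> real" where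
  "curve_length n p = (\<Sum>k<n. elen n p k)"

definition curve_area :: "real \<Rightarrow> nat \<Rightarrow> (nat \<Rightarrow> complex) \<Rightarrow> real" where
  "curve_area \<sigma> n p = (1/2) * (\<Sum>k<n. inner (p k) (normal \<sigma> n p k) * elen n p k)"

definition pgrad :: "((nat \<Rightarrow> complex) \<Rightarrow> real) \<Rightarrow> (nat \<Rightarrow> complex) \<Rightarrow> nat \<Rightarrow> complex" where
  "pgrad F p k = (SOME D. GDERIV (\<lambda>x. F (p(k := x))) (p k) :> D)"

end

theory Submission
  imports Defs
begin

text \<open>Both energies are sums over edges of functions that are affine in each vertex inside a
  norm or an inner product, so their partial gradients are explicit: moving p_k changes L by
  the difference of the unit tangents of the two edges at p_k and Vol by half the rotated
  chord from p_{k-1} to p_{k+1}. For edges of common length l_0 and unit tangent T_k, with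
  T_k = cis (\<sigma> \<theta>_k) T_{k-1}, the force at p_k factors as
  2 i \<sigma> T_{k-1} cis (\<sigma> \<theta>_k/2) (\<kappa> l_0/2 cos (\<theta>_k/2) - sin (\<theta>_k/2)),
  which vanishes exactly when tan (\<theta>_k/2) = \<kappa> l_0/2 and \<theta>_k \<noteq> \<pi>.\<close>

lemma pgrad_eqI:
  assumes "GDERIV (\<lambda>x. F (p(k := x))) (p k) :> D"
  shows "pgrad F p k = D"
proof -
  let ?D = "SOME D. GDERIV (\<lambda>x. F (p(k := x))) (p k) :> D"
  have "GDERIV (\<lambda>x. F (p(k := x))) (p k) :> ?D"
    using assms by (rule someI)
  then have "(\<lambda>h. inner h ?D) = (\<lambda>h. inner h D)"
    using assms unfolding gderiv_def by (rule has_derivative_unique)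
  then have "inner (?D - D) ?D = inner (?D - D) D" by metis
  then have "inner (?D - D) (?D - D) = 0" by (simp add: inner_diff_right)
  then show ?thesis unfolding pgrad_def by simp
qed

lemma GDERIV_sum:
  assumes "\<And>j. j \<in> S \<Longrightarrow> GDERIV (f j) x :> D j"
  shows "GDERIV (\<lambda>x. \<Sum>j\<in>S. f j x) x :> (\<Sum>j\<in>S. D j)"
  using assms unfolding gderiv_def inner_sum_right
  by (rule has_derivative_sum)

lemma GDERIV_const_mult:
  assumes "GDERIV f x :> D"
  shows "GDERIV (\<lambda>x. r * f x) x :> r *\<^sub>R D"
  using has_derivative_mult_right[OF assms[unfolded gderiv_def], of r]
  unfolding gderiv_def by simp

lemma GDERIV_norm_affine:
  fixes E x0 :: complex
  assumes "E \<noteq> 0"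
  shows "GDERIV (\<lambda>x. cmod (E + of_real c * (x - x0))) x0 :> c *\<^sub>R sgn E"
proof -
  have "((\<lambda>x. E + of_real c * (x - x0)) has_derivative (\<lambda>h. of_real c * h)) (at x0)"
    by (auto intro!: derivative_eq_intros)
  moreover have "(cmod has_derivative (\<lambda>h. inner h (sgn E))) (at (E + of_real c * (x0 - x0)))"
    using has_derivative_norm[OF assms] by simp
  ultimately have "((\<lambda>x. cmod (E + of_real c * (x - x0))) has_derivative (\<lambda>h. inner (of_real c * h) (sgn E))) (at x0)"
    by (rule has_derivative_compose)
  moreover have "(\<lambda>h. inner (of_real c * h) (sgn E)) = (\<lambda>h. inner h (c *\<^sub>R sgn E))"
    by (auto simp: inner_complex_def algebra_simps)
  ultimately show ?thesis unfolding gderiv_def by simp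
qed

lemma GDERIV_inner_affine:
  fixes P E I x0 :: complex
  shows "GDERIV (\<lambda>x. inner (P + of_real \<alpha> * (x - x0)) (I * (E + of_real \<beta> * (x - x0)))) x0
     :> \<alpha> *\<^sub>R (I * E) + \<beta> *\<^sub>R (cnj I * P)"
proof -
  have "((\<lambda>x. inner (P + of_real \<alpha> * (x - x0)) (I * (E + of_real \<beta> * (x - x0)))) has_derivative
     (\<lambda>h. inner P (I * (of_real \<beta> * h)) + inner (of_real \<alpha> * h) (I * E))) (at x0)"
    using has_derivative_inner[of "\<lambda>x. P + of_real \<alpha> * (x - x0)" _ x0 UNIV
        "\<lambda>x. I * (E + of_real \<beta> * (x - x0))"]
    by (auto intro!: derivative_eq_intros)
  moreover have "(\<lambda>h. inner P (I * (of_real \<beta> * h)) + inner (of_real \<alpha> * h) (I * E))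
     = (\<lambda>h. inner h (\<alpha> *\<^sub>R (I * E) + \<beta> *\<^sub>R (cnj I * P)))"
    by (auto simp: inner_complex_def algebra_simps)
  ultimately show ?thesis unfolding gderiv_def by simp
qed

definition incidence :: "nat \<Rightarrow> nat \<Rightarrow> nat \<Rightarrow> real" where
  "incidence n k j = of_bool ((j + 1) mod n = k) - of_bool (j mod n = k)"

lemma edge_fun_upd:
  "edge n (p(k := x)) j = edge n p j + of_real (incidence n k j) * (x - p k)"
  unfolding edge_def incidence_def by (simp add: algebra_simps)

lemma fun_upd_affine: "(p(k := x)) j = p j + of_real (of_bool (j = k)) * (x - p k)"
  by simp

lemma Suc_mod_eq_iff_prev:
  assumes "j < n" "k < n"
  shows "Suc j mod n = k \<longleftrightarrow> j = (k + n - 1) mod n"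
  using assms by (cases "Suc j = n"; cases k) (auto simp: mod_Suc_eq)

lemma sum_incidence:
  fixes X :: "nat \<Rightarrow> 'a::real_vector"
  assumes "k < n"
  shows "(\<Sum>j<n. incidence n k j *\<^sub>R X j) = X ((k + n - 1) mod n) - X k"
proof -
  have "(\<Sum>j<n. incidence n k j *\<^sub>R X j)
      = (\<Sum>j<n. if j = (k + n - 1) mod n then X j else 0) - (\<Sum>j<n. if j = k then X j else 0)"
    unfolding sum_subtractf[symmetric]
    using assms by (intro sum.cong) (auto simp: incidence_def Suc_mod_eq_iff_prev)
  also have "\<dots> = X ((k + n - 1) mod n) - X k" using assms by simp
  finally show ?thesis .
qed

lemma pgrad_curve_length:
  assumes "closed_discrete_curve n p" "k < n"
  shows "pgrad (curve_length n) p k = sgn (edge n p ((k + n - 1) mod n)) - sgn (edge n p k)"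
proof (rule pgrad_eqI)
  have "(\<lambda>x. curve_length n (p(k := x)))
      = (\<lambda>x. \<Sum>j<n. cmod (edge n p j + of_real (incidence n k j) * (x - p k)))"
    unfolding curve_length_def elen_def edge_fun_upd ..
  moreover have "GDERIV (\<lambda>x. \<Sum>j<n. cmod (edge n p j + of_real (incidence n k j) * (x - p k))) (p k)
      :> (\<Sum>j<n. incidence n k j *\<^sub>R sgn (edge n p j))"
    using assms(1) unfolding closed_discrete_curve_def elen_def
    by (intro GDERIV_sum GDERIV_norm_affine) auto
  ultimately show "GDERIV (\<lambda>x. curve_length n (p(k := x))) (p k)
      :> sgn (edge n p ((k + n - 1) mod n)) - sgn (edge n p k)"
    by (simp add: sum_incidence[OF assms(2)])
qed

lemma inner_normal_elen:
  "inner z (normal \<sigma> n p j) * elen n p j = inner z (cis (\<sigma> * pi / 2) * edge n p j)"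
  by (cases "elen n p j = 0")
    (simp_all add: elen_def normal_def rot_def inner_complex_def field_simps)

lemma pgrad_curve_area:
  assumes "k < n"
  shows "pgrad (curve_area \<sigma> n) p k = (1/2) *\<^sub>R (cis (\<sigma> * pi / 2) * edge n p k
      + (cnj (cis (\<sigma> * pi / 2)) * p ((k + n - 1) mod n) - cnj (cis (\<sigma> * pi / 2)) * p k))"
proof (rule pgrad_eqI)
  define I where "I = cis (\<sigma> * pi / 2)"
  have "(\<lambda>x. curve_area \<sigma> n (p(k := x))) = (\<lambda>x. (1/2) * (\<Sum>j<n.
      inner (p j + of_real (of_bool (j = k)) * (x - p k))
        (I * (edge n p j + of_real (incidence n k j) * (x - p k)))))"
    unfolding curve_area_def inner_normal_elen I_def edge_fun_upd fun_upd_affine[of p k] ..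
  moreover have "GDERIV (\<lambda>x. (1/2) * (\<Sum>j<n.
      inner (p j + of_real (of_bool (j = k)) * (x - p k))
        (I * (edge n p j + of_real (incidence n k j) * (x - p k))))) (p k)
     :> (1/2) *\<^sub>R (\<Sum>j<n. of_bool (j = k) *\<^sub>R (I * edge n p j) + incidence n k j *\<^sub>R (cnj I * p j))"
    by (intro GDERIV_const_mult GDERIV_sum GDERIV_inner_affine)
  moreover have "(\<Sum>j<n. of_bool (j = k) *\<^sub>R (I * edge n p j) + incidence n k j *\<^sub>R (cnj I * p j))
      = I * edge n p k + (cnj I * p ((k + n - 1) mod n) - cnj I * p k)"
  proof -
    have "(\<Sum>j<n. of_bool (j = k) *\<^sub>R (I * edge n p j)) = (\<Sum>j<n. if j = k then I * edge n p j else 0)"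
      by (intro sum.cong) auto
    then show ?thesis using assms by (simp add: sum.distrib sum_incidence)
  qed
  ultimately show "GDERIV (\<lambda>x. curve_area \<sigma> n (p(k := x))) (p k) :> (1/2) *\<^sub>R (cis (\<sigma> * pi / 2)
      * edge n p k + (cnj (cis (\<sigma> * pi / 2)) * p ((k + n - 1) mod n) - cnj (cis (\<sigma> * pi / 2)) * p k))"
    unfolding I_def by simp
qed

lemma ex1_cis_signed_angle:
  assumes "\<sigma> = 1 \<or> \<sigma> = -1" and "cmod u = 1"
  shows "\<exists>!t. t \<in> {-pi<..pi} \<and> cis (\<sigma> * t) = u"
proof -
  define w where "w = (if \<sigma> = 1 then u else cnj u)"
  have cis_iff: "cis (\<sigma> * t) = u \<longleftrightarrow> cis t = w" for t
    using assms(1) unfolding w_def by (auto simp flip: cis_cnj)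
  have "w \<noteq> 0" "sgn w = w" using assms(2) by (auto simp: w_def sgn_div_norm)
  then have "cis (Arg w) = w" "Arg w \<in> {-pi<..pi}"
    using Arg_bounded[of w] by (simp_all add: cis_Arg)
  moreover have "t = Arg w" if "t \<in> {-pi<..pi}" "cis t = w" for t
    using that \<open>sgn w = w\<close> by (intro cis_Arg_unique[symmetric]) auto
  ultimately show ?thesis unfolding cis_iff by blast
qed

lemma normal_eq_cis_sgn_edge: "normal \<sigma> n p j = cis (\<sigma> * pi / 2) * sgn (edge n p j)"
  by (simp add: normal_def rot_def elen_def sgn_eq)

lemma norm_sgn_edge:
  assumes "closed_discrete_curve n p" "j < n"
  shows "cmod (sgn (edge n p j)) = 1"
  using assms by (simp add: closed_discrete_curve_def elen_def norm_sgn)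

lemma signed_angle:
  assumes "\<sigma> = 1 \<or> \<sigma> = -1" "closed_discrete_curve n p" "k < n"
  shows "signed_angle \<sigma> n p k \<in> {-pi<..pi}"
    and "sgn (edge n p k) = cis (\<sigma> * signed_angle \<sigma> n p k) * sgn (edge n p ((k + n - 1) mod n))"
proof -
  let ?T = "\<lambda>j. sgn (edge n p j)" and ?k' = "(k + n - 1) mod n"
  have "?k' < n" using assms(3) by simp
  then have "?T ?k' \<noteq> 0" using norm_sgn_edge[OF assms(2)] by force
  then have angle_iff: "normal \<sigma> n p k = rot (\<sigma> * t) (normal \<sigma> n p ?k')
      \<longleftrightarrow> cis (\<sigma> * t) = ?T k / ?T ?k'" for t
  proof -
    have "normal \<sigma> n p k = rot (\<sigma> * t) (normal \<sigma> n p ?k')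
        \<longleftrightarrow> ?T k = cis (\<sigma> * t) * ?T ?k'"
      by (simp add: normal_eq_cis_sgn_edge rot_def mult.left_commute)
    also have "\<dots> \<longleftrightarrow> cis (\<sigma> * t) = ?T k / ?T ?k'"
      using \<open>?T ?k' \<noteq> 0\<close> by (auto simp: field_simps)
    finally show ?thesis .
  qed
  have "cmod (?T k / ?T ?k') = 1"
    using norm_sgn_edge[OF assms(2)] assms(3) \<open>?k' < n\<close> by (simp add: norm_divide)
  from ex1_cis_signed_angle[OF assms(1) this]
  have "signed_angle \<sigma> n p k \<in> {-pi<..pi} \<and> cis (\<sigma> * signed_angle \<sigma> n p k) = ?T k / ?T ?k'"
    unfolding signed_angle_def angle_iff by (rule theI')
  then show "signed_angle \<sigma> n p k \<in> {-pi<..pi}"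
    and "?T k = cis (\<sigma> * signed_angle \<sigma> n p k) * ?T ?k'"
    using \<open>?T ?k' \<noteq> 0\<close> by (simp_all add: nonzero_divide_eq_eq)
qed

lemma one_minus_cis_double: "1 - cis (2 * \<phi>) = - 2 * \<i> * of_real (sin \<phi>) * cis \<phi>"
  unfolding complex_eq_iff by (simp add: cos_double_sin sin_double power2_eq_square)

lemma one_plus_cis_double: "1 + cis (2 * \<phi>) = 2 * of_real (cos \<phi>) * cis \<phi>"
  unfolding complex_eq_iff by (simp add: cos_double_cos sin_double power2_eq_square)

lemma one_minus_cis_plus_mult_one_plus_cis:
  assumes "\<sigma> = 1 \<or> \<sigma> = -1"
  shows "1 - cis (\<sigma> * \<theta>) + \<i> * of_real (c * \<sigma>) * (1 + cis (\<sigma> * \<theta>))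
    = 2 * \<i> * of_real \<sigma> * cis (\<sigma> * \<theta> / 2) * of_real (c * cos (\<theta> / 2) - sin (\<theta> / 2))"
proof -
  have "1 - cis (\<sigma> * \<theta>) + \<i> * of_real (c * \<sigma>) * (1 + cis (\<sigma> * \<theta>))
      = 2 * \<i> * cis (\<sigma> * \<theta> / 2) * of_real (c * \<sigma> * cos (\<sigma> * \<theta> / 2) - sin (\<sigma> * \<theta> / 2))"
    using one_minus_cis_double[of "\<sigma> * \<theta> / 2"] one_plus_cis_double[of "\<sigma> * \<theta> / 2"]
    by (simp add: algebra_simps)
  then show ?thesis using assms by (auto simp: algebra_simps)
qed

lemma tan_half_eq_iff:
  assumes "\<theta> \<in> {-pi<..pi}" "l > 0"
  shows "sin (\<theta> / 2) = \<kappa> * l / 2 * cos (\<theta> / 2) \<longleftrightarrow> \<theta> \<noteq> pi \<and> 2 / l * tan (\<theta> / 2) = \<kappa>"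
proof (cases "\<theta> = pi")
  case False
  with assms have "cos (\<theta> / 2) > 0" by (intro cos_gt_zero_pi) auto
  with assms show ?thesis by (auto simp: tan_def field_simps)
qed simp

lemma equilibrium_force_arclength:
  assumes "\<sigma> = 1 \<or> \<sigma> = -1" "closed_discrete_curve n p"
    and "\<forall>j<n. elen n p j = elen n p 0" "k < n"
  defines "\<theta> \<equiv> signed_angle \<sigma> n p k" and "l \<equiv> elen n p 0"
  shows "pgrad (curve_length n) p k + of_real \<kappa> * pgrad (curve_area \<sigma> n) p k
    = 2 * \<i> * of_real \<sigma> * sgn (edge n p ((k + n - 1) mod n)) * cis (\<sigma> * \<theta> / 2)
      * of_real (\<kappa> * l / 2 * cos (\<theta> / 2) - sin (\<theta> / 2))"
proof -
  define k' where "k' = (k + n - 1) mod n"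
  define T where "T = sgn (edge n p k')"
  have "k' < n" using assms(4) by (simp add: k'_def)
  have edge_eq: "edge n p j = of_real l * sgn (edge n p j)" if "j < n" for j
  proof -
    have "cmod (edge n p j) = l"
      using assms(3) that unfolding l_def elen_def by blast
    moreover have "edge n p j = of_real (cmod (edge n p j)) * sgn (edge n p j)"
      by (cases "edge n p j = 0") (simp_all add: sgn_eq)
    ultimately show ?thesis by simp
  qed
  have tangent_k: "sgn (edge n p k) = cis (\<sigma> * \<theta>) * T"
    using signed_angle(2)[OF assms(1,2,4)] by (simp add: \<theta>_def T_def k'_def)
  have edge_k: "edge n p k = of_real l * cis (\<sigma> * \<theta>) * T"
    using edge_eq[OF assms(4)] by (simp add: tangent_k)
  have "p k' - p k = - edge n p k'"
    using \<open>k' < n\<close> assms(4) Suc_mod_eq_iff_prev[of k' n k]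
    by (simp add: edge_def k'_def)
  also have "\<dots> = - of_real l * T"
    using edge_eq[OF \<open>k' < n\<close>] by (simp add: T_def)
  finally have chord: "p k' - p k = - of_real l * T" .
  have I: "cis (\<sigma> * pi / 2) = \<i> * of_real \<sigma>" "cnj (cis (\<sigma> * pi / 2)) = - \<i> * of_real \<sigma>"
    using assms(1) by auto
  have "pgrad (curve_length n) p k + of_real \<kappa> * pgrad (curve_area \<sigma> n) p k
     = T * (1 - cis (\<sigma> * \<theta>) + \<i> * of_real (\<kappa> * l / 2 * \<sigma>) * (1 + cis (\<sigma> * \<theta>)))"
    unfolding pgrad_curve_length[OF assms(2,4)] pgrad_curve_area[OF assms(4)] I
      k'_def[symmetric] right_diff_distrib[symmetric] T_def[symmetric] tangent_k
    unfolding chord edge_k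
    by (simp add: scaleR_conv_of_real algebra_simps)
  then show ?thesis
    unfolding one_minus_cis_plus_mult_one_plus_cis[OF assms(1)] by (simp add: T_def k'_def)
qed

lemma equilibrium_at_vertex_iff:
  assumes "\<sigma> = 1 \<or> \<sigma> = -1" "closed_discrete_curve n p"
    and "\<forall>j<n. elen n p j = elen n p 0" "k < n"
  shows "pgrad (curve_length n) p k + of_real \<kappa> * pgrad (curve_area \<sigma> n) p k = 0
     \<longleftrightarrow> signed_angle \<sigma> n p k \<noteq> pi \<and> 2 / elen n p 0 * tan (signed_angle \<sigma> n p k / 2) = \<kappa>"
proof -
  let ?\<theta> = "signed_angle \<sigma> n p k"
  have "(k + n - 1) mod n < n" using assms(4) by simp
  then have "sgn (edge n p ((k + n - 1) mod n)) \<noteq> 0"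
    using norm_sgn_edge[OF assms(2)] by force
  moreover have "\<sigma> \<noteq> 0" using assms(1) by auto
  ultimately have "pgrad (curve_length n) p k + of_real \<kappa> * pgrad (curve_area \<sigma> n) p k = 0
      \<longleftrightarrow> \<kappa> * elen n p 0 / 2 * cos (?\<theta> / 2) - sin (?\<theta> / 2) = 0"
    unfolding equilibrium_force_arclength[OF assms] mult_eq_0_iff of_real_eq_0_iff by simp
  also have "\<dots> \<longleftrightarrow> sin (?\<theta> / 2) = \<kappa> * elen n p 0 / 2 * cos (?\<theta> / 2)"
    by linarith
  also have "\<dots> \<longleftrightarrow> ?\<theta> \<noteq> pi \<and> 2 / elen n p 0 * tan (?\<theta> / 2) = \<kappa>"
    using signed_angle(1)[OF assms(1,2,4)] assms(2,4)
    by (intro tan_half_eq_iff) (auto simp: closed_discrete_curve_def elen_def)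
  finally show ?thesis .
qed

theorem mainTheorem5:
  fixes n :: nat and p :: "nat \<Rightarrow> complex" and \<sigma> \<kappa> :: real
  assumes "\<sigma> = 1 \<or> \<sigma> = -1"
    and "closed_discrete_curve n p"
    and "\<forall>k<n. elen n p k = elen n p 0"
    and "\<kappa> \<noteq> 0"
  shows "(\<forall>k<n. pgrad (curve_length n) p k + of_real \<kappa> * pgrad (curve_area \<sigma> n) p k = 0)
     \<longleftrightarrow> (\<forall>k<n. signed_angle \<sigma> n p k \<noteq> pi \<and>
              2 / elen n p 0 * tan (signed_angle \<sigma> n p k / 2) = \<kappa>)"
  using equilibrium_at_vertex_iff[OF assms(1-3)] by blast

end
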